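(* Let $\mathcal{X}\subseteq\mathbb{R}^n$, $\mathcal{Y}\subseteq\mathbb{R}^m$ be closed convex sets, $f:\mathcal{X}\to\mathbb{R}$ and $g:\mathcal{Y}\to\mathbb{R}$ convex, and $\boldsymbol{\Phi}:\mathbb{R}^n\to\mathbb{R}^m$ continuously differentiable on an open set containing $\mathcal{X}$ such that $\mathbf{x}\mapsto\langle\mathbf{y},\boldsymbol{\Phi}(\mathbf{x})\rangle$ is convex on $\mathcal{X}$ for every $\mathbf{y}\in\mathcal{Y}$. Let $\mathcal{L}(\mathbf{x},\mathbf{y})=f(\mathbf{x})+\langle\mathbf{y},\boldsymbol{\Phi}(\mathbf{x})\rangle-g(\mathbf{y})$ and let $\Omega^*\subseteq\Omega$ be the (assumed nonempty) set of saddle points of $\mathcal{L}$ on $\mathcal{X}\times\mathcal{Y}$, i.e. of points $\mathbf{w}^*=(\mathbf{x}^*;\mathbf{y}^* )\in\Omega$ with $\mathcal{L}(\mathbf{x}^*,\mathbf{y})\le\mathcal{L}(\mathbf{x}^*,\mathbf{y}^* )\le\mathcal{L}(\mathbf{x},\mathbf{y}^* )$ for all $\mathbf{x}\in\mathcal{X},\mathbf{y}\in\mathcal{Y}$. Fix $\alpha\in[0,1]$, $\mathbf{w}^k=(\mathbf{x}^k;\mathbf{y}^k)\in\Omega$, $r_k>0$, $s_k>0$, and let $\tilde{\mathbf{w}}^k=(\tilde{\mathbf{x}}^k;\tilde{\mathbf{y}}^k)$ be produced by the prediction step $$\tilde{\mathbf{x}}^k\in\arg\min\Big\{\mathcal{L}(\mathbf{x},\mathbf{y}^k)+\tfrac{r_k}{2}\|\mathbf{x}-\mathbf{x}^k\|^2\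 \Big|\ \mathbf{x}\in\mathcal{X}\Big\},$$ $$\tilde{\mathbf{y}}^k\in\arg\max\Big\{\mathcal{L}(\tilde{\mathbf{x}}^k,\mathbf{y})+\alpha\,\mathbf{y}^T\nabla\boldsymbol{\Phi}(\tilde{\mathbf{x}}^k)(\tilde{\mathbf{x}}^k-\mathbf{x}^k)-\tfrac{s_k}{2}\|\mathbf{y}-\mathbf{y}^k\|^2\ \Big|\ \mathbf{y}\in\mathcal{Y}\Big\},$$ and let $\mathbf{Q}_k=\begin{pmatrix} r_k\mathbf{I}_n & -\nabla\boldsymbol{\Phi}(\tilde{\mathbf{x}}^k)^T\\ -\alpha\nabla\boldsymbol{\Phi}(\tilde{\mathbf{x}}^k) & s_k\mathbf{I}_m\end{pmatrix}$. Let $\mathbf{M}_k$ be an invertible $(n+m)\times(n+m)$ matrix such that $\boldsymbol{\Sigma}_k=\mathbf{Q}_k\mathbf{M}_k^{-1}$ is symmetric positive definite and $\mathbf{G}_k=\mathbf{Q}_k^T+\mathbf{Q}_k-\mathbf{M}_k^T\boldsymbol{\Sigma}_k\mathbf{M}_k$ is positive definite, and set $\mathbf{w}^{k+1}=\mathbf{w}^k-\mathbf{M}_k(\mathbf{w}^k-\tilde{\mathbf{w}}^k)$. Then for every $\mathbf{w}^*\in\Omega^*$, $$\|\mathbf{w}^*-\mathbf{w}^{k+1}\|_{\boldsymbol{\Sigma}_k}^2\le\|\mathbf{w}^*-\mathbf{w}^k\|_{\boldsymbol{\Sigma}_k}^2-\|\mathbf{w}^k-\tilde{\mathbf{w}}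^k\|_{\mathbf{G}_k}^2.$$
   Context: $\nabla\boldsymbol{\Phi}(\mathbf{x})$ is the $m\times n$ Jacobian of $\boldsymbol{\Phi}$ (entry $(i,j)$ is $\partial\phi_i/\partial x_j$). $\Omega=\mathcal{X}\times\mathcal{Y}$ and $\mathbf{w}=(\mathbf{x};\mathbf{y})$ denotes the stacked vector. For a symmetric positive (semi)definite matrix $\mathbf{H}$, $\|\mathbf{v}\|_{\mathbf{H}}^2=\mathbf{v}^T\mathbf{H}\mathbf{v}$. *)

theory Defs
  imports "HOL-Analysis.Analysis"
begin

definition jacobian :: "(real^'n \<Rightarrow> real^'m) \<Rightarrow> real^'n \<Rightarrow> real^'n^'m" where
  "jacobian \<Phi> x = matrix (frechet_derivative \<Phi> (at x))"

definition stack :: "real^'n \<Rightarrow> real^'m \<Rightarrow> real^('n + 'm)" where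
  "stack x y = (\<chi> i. case i of Inl a \<Rightarrow> x $ a | Inr b \<Rightarrow> y $ b)"

definition pos_def_mat :: "real^'k^'k \<Rightarrow> bool" where
  "pos_def_mat H \<longleftrightarrow> (\<forall>v. v \<noteq> 0 \<longrightarrow> v \<bullet> (H *v v) > 0)"

definition sym_mat :: "real^'k^'k \<Rightarrow> bool" where
  "sym_mat H \<longleftrightarrow> transpose H = H"

definition hnorm_sq :: "real^'k^'k \<Rightarrow> real^'k \<Rightarrow> real" where
  "hnorm_sq H v = v \<bullet> (H *v v)"

definition lagr :: "(real^'n \<Rightarrow> real) \<Rightarrow> (real^'n \<Rightarrow> real^'m) \<Rightarrow> (real^'m \<Rightarrow> real)
    \<Rightarrow> real^'n \<Rightarrow> real^'m \<Rightarrow> real" where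
  "lagr f \<Phi> g x y = f x + y \<bullet> \<Phi> x - g y"

definition saddle_points :: "(real^'n) set \<Rightarrow> (real^'m) set \<Rightarrow> (real^'n \<Rightarrow> real^'m \<Rightarrow> real)
    \<Rightarrow> (real^('n + 'm)) set" where
  "saddle_points X Y L = {stack xs ys | xs ys. xs \<in> X \<and> ys \<in> Y \<and>
      (\<forall>x\<in>X. \<forall>y\<in>Y. L xs y \<le> L xs ys \<and> L xs ys \<le> L x ys)}"

definition Qmat :: "real \<Rightarrow> real \<Rightarrow> real \<Rightarrow> real^'n^'m \<Rightarrow> real^('n + 'm)^('n + 'm)" where
  "Qmat r s \<alpha> J = (\<chi> i j. case i of
      Inl a \<Rightarrow> (case j of Inl b \<Rightarrow> (if a = b then r else 0) | Inr b \<Rightarrow> - (J $ b $ a))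
    | Inr a \<Rightarrow> (case j of Inl b \<Rightarrow> - \<alpha> * (J $ a $ b) | Inr b \<Rightarrow> (if a = b then s else 0)))"

end

theory Submission
  imports Defs
begin

text \<open>
  Each half of the prediction step minimises a convex function plus a differentiable one, so its
  minimiser satisfies a variational inequality. Testing the primal inequality and the dual one
  at the saddle point, adding the gradient inequality for the convex map
  \<open>x \<mapsto> \<langle>y\<^sup>~, \<Phi> x\<rangle>\<close> and the two saddle inequalities, all function values cancel and what
  remains is \<open>(w\<^sup>* - w\<^sup>~)\<^sup>T Q (w\<^sup>k - w\<^sup>~) \<le> 0\<close>. The claimed contraction then follows from
  \<open>\<Sigma> M = Q\<close> and the symmetry of \<open>\<Sigma>\<close> by expanding the quadratic forms.
\<close>

lemma variational_inequality_at_minimizer: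
  fixes h k :: "'a::real_normed_vector \<Rightarrow> real"
  assumes C: "convex C" and h: "convex_on C h" and k: "(k has_derivative k') (at z)"
    and z: "z \<in> C" and x: "x \<in> C"
    and min: "\<And>y. y \<in> C \<Longrightarrow> h z + k z \<le> h y + k y"
  shows "0 \<le> h x - h z + k' (x - z)"
proof -
  define \<phi> where "\<phi> = (\<lambda>t::real. k (z + t *\<^sub>R (x - z)))"
  have "((\<lambda>t. z + t *\<^sub>R (x - z)) has_derivative (\<lambda>t. t *\<^sub>R (x - z))) (at 0)"
    by (auto intro!: derivative_eq_intros)
  from diff_chain_at[OF this, of k k'] k
  have "(\<phi> has_derivative (\<lambda>t. k' (t *\<^sub>R (x - z)))) (at 0)"
    by (simp add: \<phi>_def o_def)
  moreover have "(\<lambda>t. k' (t *\<^sub>R (x - z))) = (*) (k' (x - z))"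
    using has_derivative_linear[OF k] by (auto simp: linear_scale)
  ultimately have "(\<phi> has_real_derivative k' (x - z)) (at 0)"
    by (simp add: has_field_derivative_def)
  then have "((\<lambda>t. (\<phi> t - \<phi> 0) / t) \<longlongrightarrow> k' (x - z)) (at_right 0)"
    by (simp add: DERIV_def filterlim_at_split)
  then have lim: "((\<lambda>t. h x - h z + (\<phi> t - \<phi> 0) / t) \<longlongrightarrow> h x - h z + k' (x - z)) (at_right 0)"
    by (intro tendsto_intros)
  have "0 \<le> h x - h z + (\<phi> t - \<phi> 0) / t" if t: "0 < t" "t < 1" for t
  proof -
    have zt: "z + t *\<^sub>R (x - z) = (1 - t) *\<^sub>R z + t *\<^sub>R x"
      by (simp add: algebra_simps)
    then have "z + t *\<^sub>R (x - z) \<in> C"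
      using C z x t by (simp add: convexD_alt)
    then have "h z + \<phi> 0 \<le> h (z + t *\<^sub>R (x - z)) + \<phi> t"
      using min by (simp add: \<phi>_def)
    moreover have "h (z + t *\<^sub>R (x - z)) \<le> (1 - t) * h z + t * h x"
      unfolding zt using t convex_onD[OF h, of t z x] z x by simp
    ultimately have "0 \<le> t * (h x - h z) + (\<phi> t - \<phi> 0)"
      by (simp add: algebra_simps)
    then show ?thesis
      using t by (simp add: field_simps)
  qed
  then have "eventually (\<lambda>t. 0 \<le> h x - h z + (\<phi> t - \<phi> 0) / t) (at_right 0)"
    unfolding eventually_at_right_field by (intro exI[of _ 1]) auto
  from tendsto_lowerbound[OF lim this] show ?thesis
    by simp
qed

lemma convex_on_ge_tangent:
  fixes h :: "'a::real_normed_vector \<Rightarrow> real"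
  assumes "convex C" "convex_on C h" "(h has_derivative h') (at z)" "z \<in> C" "x \<in> C"
  shows "h z + h' (x - z) \<le> h x"
  using variational_inequality_at_minimizer[of C h "\<lambda>y. - h y" "\<lambda>v. - h' v" z x] assms
  by (auto intro: has_derivative_minus)

lemma jacobian_has_derivative:
  "\<Phi> differentiable (at x) \<Longrightarrow> (\<Phi> has_derivative (\<lambda>v. jacobian \<Phi> x *v v)) (at x)"
  using jacobian_works[of \<Phi> "at x"]
  by (simp add: Defs.jacobian_def Cartesian_Euclidean_Space.jacobian_def)

lemma primal_prediction_variational_inequality:
  assumes X: "convex X" and f: "convex_on X f" and \<Phi>: "\<Phi> differentiable (at xt)"
    and xt: "xt \<in> X" and x: "x \<in> X"
    and min: "\<forall>x\<in>X. lagr f \<Phi> g xt yk + r / 2 * (norm (xt - xk))^2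
                   \<le> lagr f \<Phi> g x yk + r / 2 * (norm (x - xk))^2"
  shows "0 \<le> f x - f xt + yk \<bullet> (jacobian \<Phi> xt *v (x - xt)) + r * ((xt - xk) \<bullet> (x - xt))"
proof -
  define k where "k = (\<lambda>x. yk \<bullet> \<Phi> x - g yk + r / 2 * ((x - xk) \<bullet> (x - xk)))"
  have "(k has_derivative (\<lambda>v. yk \<bullet> (jacobian \<Phi> xt *v v) + r * ((xt - xk) \<bullet> v))) (at xt)"
    unfolding k_def using jacobian_has_derivative[OF \<Phi>]
    by (auto intro!: derivative_eq_intros simp: inner_commute algebra_simps)
  moreover have "f xt + k xt \<le> f y + k y" if "y \<in> X" for y
    using min that by (simp add: k_def lagr_def power2_norm_eq_inner)
  ultimately show ?thesis
    using variational_inequality_at_minimizer[OF X f _ xt x] by force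
qed

lemma dual_prediction_variational_inequality:
  assumes Y: "convex Y" and g: "convex_on Y g" and yt: "yt \<in> Y" and y: "y \<in> Y"
    and max: "\<forall>y\<in>Y. lagr f \<Phi> g xt y + \<alpha> * (y \<bullet> c) - s / 2 * (norm (y - yk))^2
                   \<le> lagr f \<Phi> g xt yt + \<alpha> * (yt \<bullet> c) - s / 2 * (norm (yt - yk))^2"
  shows "0 \<le> g y - g yt - (y - yt) \<bullet> \<Phi> xt - \<alpha> * ((y - yt) \<bullet> c) + s * ((yt - yk) \<bullet> (y - yt))"
proof -
  define k where "k = (\<lambda>y. - f xt - y \<bullet> \<Phi> xt - \<alpha> * (y \<bullet> c) + s / 2 * ((y - yk) \<bullet> (y - yk)))"
  have "(k has_derivative (\<lambda>v. - (v \<bullet> \<Phi> xt) - \<alpha> * (v \<bullet> c) + s * ((yt - yk) \<bullet> v))) (at yt)"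
    unfolding k_def by (auto intro!: derivative_eq_intros simp: inner_commute algebra_simps)
  moreover have "g yt + k yt \<le> g y + k y" if "y \<in> Y" for y
    using max that by (fastforce simp: k_def lagr_def power2_norm_eq_inner)
  ultimately show ?thesis
    using variational_inequality_at_minimizer[OF Y g _ yt y] by (force simp: inner_diff_left)
qed

lemma sum_UNIV_Plus:
  "sum h (UNIV :: ('a::finite + 'b::finite) set) = sum (h \<circ> Inl) UNIV + sum (h \<circ> Inr) UNIV"
  by (subst UNIV_Plus_UNIV[symmetric], subst sum.Plus) auto

lemma inner_stack: "stack a b \<bullet> stack c d = a \<bullet> c + b \<bullet> d"
  unfolding inner_vec_def by (simp add: sum_UNIV_Plus stack_def o_def)

lemma stack_diff: "stack a b - stack c d = stack (a - c) (b - d)"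
  by (simp add: vec_eq_iff stack_def split: sum.split)

lemma Qmat_mult_stack:
  "Qmat r s \<alpha> J *v stack a b = stack (r *\<^sub>R a - transpose J *v b) (s *\<^sub>R b - \<alpha> *\<^sub>R (J *v a))"
proof -
  have [simp]: "(if p then r else 0) * (c::real) = (if p then r * c else 0)" for p r c
    by simp
  have "(Qmat r s \<alpha> J *v stack a b) $ i
      = stack (r *\<^sub>R a - transpose J *v b) (s *\<^sub>R b - \<alpha> *\<^sub>R (J *v a)) $ i" for i
    by (cases i) (simp_all add: matrix_vector_mult_def sum_UNIV_Plus Qmat_def stack_def o_def
        transpose_def sum_negf sum_distrib_left mult.assoc)
  then show ?thesis
    by (simp add: vec_eq_iff)
qed

lemma prediction_step_Qmat_inequality:
  assumes X: "convex X" and Y: "convex Y" and f: "convex_on X f" and g: "convex_on Y g"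
    and \<Phi>: "\<Phi> differentiable (at xt)" and \<Phi>_conv: "convex_on X (\<lambda>x. yt \<bullet> \<Phi> x)"
    and xt: "xt \<in> X" and yt: "yt \<in> Y" and xs: "xs \<in> X" and ys: "ys \<in> Y"
    and saddle: "lagr f \<Phi> g xs yt \<le> lagr f \<Phi> g xt ys"
    and min: "\<forall>x\<in>X. lagr f \<Phi> g xt yk + r / 2 * (norm (xt - xk))^2
                   \<le> lagr f \<Phi> g x yk + r / 2 * (norm (x - xk))^2"
    and max: "\<forall>y\<in>Y. lagr f \<Phi> g xt y + \<alpha> * (y \<bullet> (jacobian \<Phi> xt *v (xt - xk))) - s / 2 * (norm (y - yk))^2
                   \<le> lagr f \<Phi> g xt yt + \<alpha> * (yt \<bullet> (jacobian \<Phi> xt *v (xt - xk))) - s / 2 * (norm (yt - yk))^2"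
  shows "(stack xs ys - stack xt yt) \<bullet> (Qmat r s \<alpha> (jacobian \<Phi> xt) *v (stack xk yk - stack xt yt)) \<le> 0"
proof -
  define J where "J = jacobian \<Phi> xt"
  have primal: "0 \<le> f xs - f xt + yk \<bullet> (J *v (xs - xt)) + r * ((xt - xk) \<bullet> (xs - xt))"
    using primal_prediction_variational_inequality[OF X f \<Phi> xt xs min] by (simp add: J_def)
  have dual: "0 \<le> g ys - g yt - (ys - yt) \<bullet> \<Phi> xt - \<alpha> * ((ys - yt) \<bullet> (J *v (xt - xk)))
      + s * ((yt - yk) \<bullet> (ys - yt))"
    using dual_prediction_variational_inequality[OF Y g yt ys max] by (simp add: J_def)
  have "((\<lambda>x. yt \<bullet> \<Phi> x) has_derivative (\<lambda>v. yt \<bullet> (J *v v))) (at xt)"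
    unfolding J_def using jacobian_has_derivative[OF \<Phi>] by (rule has_derivative_inner_right)
  from convex_on_ge_tangent[OF X \<Phi>_conv this xt xs]
  have tangent: "yt \<bullet> \<Phi> xt + yt \<bullet> (J *v (xs - xt)) \<le> yt \<bullet> \<Phi> xs" .
  have "(xs - xt) \<bullet> (transpose J *v (yk - yt)) = (yk - yt) \<bullet> (J *v (xs - xt))"
    by (metis dot_lmul_matrix inner_commute vector_transpose_matrix)
  then have "(stack xs ys - stack xt yt) \<bullet> (Qmat r s \<alpha> J *v (stack xk yk - stack xt yt))
      = r * ((xs - xt) \<bullet> (xk - xt)) - (yk - yt) \<bullet> (J *v (xs - xt))
        + s * ((ys - yt) \<bullet> (yk - yt)) - \<alpha> * ((ys - yt) \<bullet> (J *v (xk - xt)))"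
    by (simp add: stack_diff Qmat_mult_stack inner_stack inner_diff_right)
  moreover have "J *v (xt - xk) = - (J *v (xk - xt))"
    by (simp add: matrix_vector_mult_diff_distrib)
  ultimately show ?thesis
    using primal dual tangent saddle
    by (simp add: J_def lagr_def inner_diff_left inner_diff_right inner_commute algebra_simps)
qed

lemma matrix_inv_mult_left: "invertible M \<Longrightarrow> matrix_inv M ** M = mat 1"
  unfolding invertible_def matrix_inv_def by (rule someI2_ex) auto

lemma hnorm_sq_transpose: "hnorm_sq (transpose H) v = hnorm_sq H v"
  unfolding hnorm_sq_def by (metis dot_lmul_matrix inner_commute vector_transpose_matrix)

lemma hnorm_sq_correction_step:
  fixes S M Q :: "real^'k^'k"
  assumes S: "transpose S = S" and SM: "S ** M = Q" and ineq: "(a + d) \<bullet> (Q *v d) \<le> 0"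
  shows "hnorm_sq S (a + M *v d)
    \<le> hnorm_sq S a - hnorm_sq (transpose Q + Q - transpose M ** S ** M) d"
proof -
  have "(M *v d) \<bullet> (S *v (M *v d)) = d \<bullet> (transpose M *v (S *v (M *v d)))"
    by (metis dot_lmul_matrix inner_commute vector_transpose_matrix)
  then have "(M *v d) \<bullet> (S *v (M *v d)) = hnorm_sq (transpose M ** S ** M) d"
    by (simp add: hnorm_sq_def matrix_vector_mul_assoc matrix_mul_assoc)
  moreover have "(M *v d) \<bullet> (S *v a) = a \<bullet> (Q *v d)"
    by (metis SM S dot_lmul_matrix inner_commute matrix_vector_mul_assoc vector_transpose_matrix)
  moreover have "a \<bullet> (S *v (M *v d)) = a \<bullet> (Q *v d)"
    by (simp add: matrix_vector_mul_assoc SM)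
  ultimately have "hnorm_sq S (a + M *v d)
      = hnorm_sq S a + 2 * (a \<bullet> (Q *v d)) + hnorm_sq (transpose M ** S ** M) d"
    by (simp add: hnorm_sq_def inner_add_left inner_add_right matrix_vector_right_distrib)
  moreover have "hnorm_sq (transpose Q + Q - transpose M ** S ** M) d
      = 2 * hnorm_sq Q d - hnorm_sq (transpose M ** S ** M) d"
    using hnorm_sq_transpose[of Q d]
    by (simp add: hnorm_sq_def matrix_vector_mult_diff_rdistrib matrix_vector_mult_add_rdistrib
        inner_diff_right inner_add_right)
  moreover have "a \<bullet> (Q *v d) + hnorm_sq Q d \<le> 0"
    using ineq by (simp add: hnorm_sq_def inner_add_left)
  ultimately show ?thesis
    by linarith
qed

theorem theorem1:
  fixes X :: "(real^'n) set" and Y :: "(real^'m) set"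
    and f :: "real^'n \<Rightarrow> real" and g :: "real^'m \<Rightarrow> real"
    and \<Phi> :: "real^'n \<Rightarrow> real^'m"
    and \<alpha> r s :: real
    and xk xt :: "real^'n" and yk yt :: "real^'m"
    and M :: "real^('n + 'm)^('n + 'm)"
    and wstar :: "real^('n + 'm)"
  assumes X: "closed X" "convex X" and Y: "closed Y" "convex Y"
    and f: "convex_on X f" and g: "convex_on Y g"
    and Phi_C1: "\<exists>U. open U \<and> X \<subseteq> U \<and> (\<forall>x\<in>U. \<Phi> differentiable (at x))
                  \<and> continuous_on U (jacobian \<Phi>)"
    and Phi_conv: "\<forall>y\<in>Y. convex_on X (\<lambda>x. y \<bullet> \<Phi> x)"
    and nonempty: "saddle_points X Y (lagr f \<Phi> g) \<noteq> {}"
    and alpha: "0 \<le> \<alpha>" "\<alpha> \<le> 1"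
    and wk: "xk \<in> X" "yk \<in> Y"
    and rs: "r > 0" "s > 0"
    and xt: "xt \<in> X"
      "\<forall>x\<in>X. lagr f \<Phi> g xt yk + r / 2 * (norm (xt - xk))^2
              \<le> lagr f \<Phi> g x yk + r / 2 * (norm (x - xk))^2"
    and yt: "yt \<in> Y"
      "\<forall>y\<in>Y. lagr f \<Phi> g xt y + \<alpha> * (y \<bullet> (jacobian \<Phi> xt *v (xt - xk))) - s / 2 * (norm (y - yk))^2
              \<le> lagr f \<Phi> g xt yt + \<alpha> * (yt \<bullet> (jacobian \<Phi> xt *v (xt - xk))) - s / 2 * (norm (yt - yk))^2"
    and M_inv: "invertible M"
    and Sigma: "sym_mat (Qmat r s \<alpha> (jacobian \<Phi> xt) ** matrix_inv M)"
      "pos_def_mat (Qmat r s \<alpha> (jacobian \<Phi> xt) ** matrix_inv M)"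
    and G: "pos_def_mat (transpose (Qmat r s \<alpha> (jacobian \<Phi> xt)) + Qmat r s \<alpha> (jacobian \<Phi> xt)
              - transpose M ** (Qmat r s \<alpha> (jacobian \<Phi> xt) ** matrix_inv M) ** M)"
    and wstar: "wstar \<in> saddle_points X Y (lagr f \<Phi> g)"
  shows "hnorm_sq (Qmat r s \<alpha> (jacobian \<Phi> xt) ** matrix_inv M)
           (wstar - (stack xk yk - M *v (stack xk yk - stack xt yt)))
         \<le> hnorm_sq (Qmat r s \<alpha> (jacobian \<Phi> xt) ** matrix_inv M) (wstar - stack xk yk)
           - hnorm_sq (transpose (Qmat r s \<alpha> (jacobian \<Phi> xt)) + Qmat r s \<alpha> (jacobian \<Phi> xt)
              - transpose M ** (Qmat r s \<alpha> (jacobian \<Phi> xt) ** matrix_inv M) ** M)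
              (stack xk yk - stack xt yt)"
proof -
  define Q where "Q = Qmat r s \<alpha> (jacobian \<Phi> xt)"
  obtain xs ys where ws: "wstar = stack xs ys" and xs: "xs \<in> X" and ys: "ys \<in> Y"
    and "\<forall>x\<in>X. \<forall>y\<in>Y. lagr f \<Phi> g xs y \<le> lagr f \<Phi> g xs ys \<and> lagr f \<Phi> g xs ys \<le> lagr f \<Phi> g x ys"
    using wstar unfolding saddle_points_def by blast
  then have "lagr f \<Phi> g xs yt \<le> lagr f \<Phi> g xt ys"
    using xt(1) yt(1) by (meson order_trans)
  moreover have "\<Phi> differentiable (at xt)"
    using Phi_C1 xt(1) by blast
  ultimately have "(wstar - stack xt yt) \<bullet> (Q *v (stack xk yk - stack xt yt)) \<le> 0"
    unfolding ws Q_def using Phi_conv X(2) Y(2) f g xt yt xs ys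
    by (intro prediction_step_Qmat_inequality) auto
  moreover have "transpose (Q ** matrix_inv M) = Q ** matrix_inv M"
    using Sigma(1) by (simp add: sym_mat_def Q_def)
  moreover have "Q ** matrix_inv M ** M = Q"
    by (simp add: matrix_mul_assoc[symmetric] matrix_inv_mult_left[OF M_inv])
  ultimately show ?thesis
    using hnorm_sq_correction_step[of "Q ** matrix_inv M" M Q "wstar - stack xk yk" "stack xk yk - stack xt yt"]
    by (simp add: Q_def algebra_simps)
qed

end
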